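(* Let $\mathcal{M}=(\mathcal{S},\mathcal{A},P,r,\gamma,\mu)$ be an MDP with finite state and action spaces, $\gamma\in[0,1)$ and initial state-action distribution $\mu$, and let $\pi$ be a fixed stationary policy. For a state-action pair $(s,a)$ and $k\in\mathbb{N}$, let $p_k(s,a)$ be the probability that $(s_k,a_k)=(s,a)$ when $(s_0,a_0)\sim d^\pi$ and the process evolves by $s_{j+1}\sim P(\cdot|s_j,a_j)$, $a_{j+1}\sim\pi(\cdot|s_{j+1})$. Then for every $k\in\mathbb{N}$ and every $(s,a)$ with $\mu(s,a)>0$, \[\frac{p_k(s,a)}{d^\pi(s,a)}\le\frac{1}{(1-\gamma)\mu(s,a)}.\]
   Context: $d^\pi(s,a)=(1-\gamma)\sum_{t\ge0}\gamma^t\mathbb{P}(s_t=s,a_t=a;\pi,\mu)$, where $(s_0,a_0)\sim\mu$ and subsequent states and actions follow $P$ and $\pi$. *)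

theory Defs
  imports "HOL-Analysis.Analysis"
begin

text \<open>Transition kernel P s a s' = P(s'|s,a); policy pol s a = pi(a|s);
  distributions over state-action pairs are functions 's => 'a => real.\<close>

definition is_distr :: "('b::finite \<Rightarrow> real) \<Rightarrow> bool" where
  "is_distr q \<longleftrightarrow> (\<forall>x. 0 \<le> q x) \<and> (\<Sum>x\<in>UNIV. q x) = 1"

definition is_sa_distr :: "('s::finite \<Rightarrow> 'a::finite \<Rightarrow> real) \<Rightarrow> bool" where
  "is_sa_distr q \<longleftrightarrow> (\<forall>s a. 0 \<le> q s a) \<and> (\<Sum>s\<in>UNIV. \<Sum>a\<in>UNIV. q s a) = 1"

definition is_kernel :: "('s::finite \<Rightarrow> 'a::finite \<Rightarrow> 's \<Rightarrow> real) \<Rightarrow> bool" where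
  "is_kernel P \<longleftrightarrow> (\<forall>s a. is_distr (P s a))"

definition is_policy :: "('s::finite \<Rightarrow> 'a::finite \<Rightarrow> real) \<Rightarrow> bool" where
  "is_policy pol \<longleftrightarrow> (\<forall>s. is_distr (pol s))"

definition sa_step ::
  "('s::finite \<Rightarrow> 'a::finite \<Rightarrow> 's \<Rightarrow> real) \<Rightarrow> ('s \<Rightarrow> 'a \<Rightarrow> real) \<Rightarrow>
   ('s \<Rightarrow> 'a \<Rightarrow> real) \<Rightarrow> ('s \<Rightarrow> 'a \<Rightarrow> real)" where
  "sa_step P pol q = (\<lambda>s' a'. (\<Sum>s\<in>UNIV. \<Sum>a\<in>UNIV. q s a * P s a s') * pol s' a')"

definition sa_dist ::
  "('s::finite \<Rightarrow> 'a::finite \<Rightarrow> 's \<Rightarrow> real) \<Rightarrow> ('s \<Rightarrow> 'a \<Rightarrow> real) \<Rightarrow>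
   ('s \<Rightarrow> 'a \<Rightarrow> real) \<Rightarrow> nat \<Rightarrow> ('s \<Rightarrow> 'a \<Rightarrow> real)" where
  "sa_dist P pol q t = (sa_step P pol ^^ t) q"

definition occupancy ::
  "('s::finite \<Rightarrow> 'a::finite \<Rightarrow> 's \<Rightarrow> real) \<Rightarrow> ('s \<Rightarrow> 'a \<Rightarrow> real) \<Rightarrow> real \<Rightarrow>
   ('s \<Rightarrow> 'a \<Rightarrow> real) \<Rightarrow> ('s \<Rightarrow> 'a \<Rightarrow> real)" where
  "occupancy P pol \<gamma> \<mu> = (\<lambda>s a. (1 - \<gamma>) * (\<Sum>t. \<gamma> ^ t * sa_dist P pol \<mu> t s a))"

end

theory Submission
  imports Defs
begin

text \<open>The occupancy measure \<open>d\<^sup>\<pi>\<close> is itself a state-action distribution, so every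
  \<open>p\<^sub>k\<close> obtained from it by the chain is a distribution and \<open>p\<^sub>k(s,a) \<le> 1\<close>. On the
  other hand the \<open>t = 0\<close> term of the series defining \<open>d\<^sup>\<pi>\<close> already gives
  \<open>d\<^sup>\<pi>(s,a) \<ge> (1 - \<gamma>) \<mu>(s,a)\<close>.\<close>

lemma sum_sa_step:
  fixes P :: "'s::finite \<Rightarrow> 'a::finite \<Rightarrow> 's \<Rightarrow> real"
  assumes "is_kernel P" "is_policy pol"
  shows "(\<Sum>s'\<in>UNIV. \<Sum>a'\<in>UNIV. sa_step P pol q s' a') = (\<Sum>s\<in>UNIV. \<Sum>a\<in>UNIV. q s a)"
proof -
  have pol1: "(\<Sum>a\<in>UNIV. pol s a) = 1" for s
    using assms(2) by (simp add: is_policy_def is_distr_def)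
  have P1: "(\<Sum>s'\<in>UNIV. P s a s') = 1" for s a
    using assms(1) by (simp add: is_kernel_def is_distr_def)
  have "(\<Sum>s'\<in>UNIV. \<Sum>a'\<in>UNIV. sa_step P pol q s' a')
      = (\<Sum>s'\<in>UNIV. (\<Sum>s\<in>UNIV. \<Sum>a\<in>UNIV. q s a * P s a s') * (\<Sum>a'\<in>UNIV. pol s' a'))"
    unfolding sa_step_def by (simp add: sum_distrib_left)
  also have "\<dots> = (\<Sum>s'\<in>UNIV. \<Sum>s\<in>UNIV. \<Sum>a\<in>UNIV. q s a * P s a s')"
    by (simp add: pol1)
  also have "\<dots> = (\<Sum>s\<in>UNIV. \<Sum>a\<in>UNIV. \<Sum>s'\<in>UNIV. q s a * P s a s')"
    by (subst sum.swap) (intro sum.cong refl sum.swap)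
  also have "\<dots> = (\<Sum>s\<in>UNIV. \<Sum>a\<in>UNIV. q s a)"
    by (simp add: P1 flip: sum_distrib_left)
  finally show ?thesis .
qed

lemma is_sa_distr_sa_step:
  fixes P :: "'s::finite \<Rightarrow> 'a::finite \<Rightarrow> 's \<Rightarrow> real"
  assumes "is_kernel P" "is_policy pol" "is_sa_distr q"
  shows "is_sa_distr (sa_step P pol q)"
proof -
  have "0 \<le> P s a s'" "0 \<le> pol s a" "0 \<le> q s a" for s a s'
    using assms by (auto simp: is_kernel_def is_policy_def is_distr_def is_sa_distr_def)
  then have "0 \<le> sa_step P pol q s' a'" for s' a'
    unfolding sa_step_def by (intro mult_nonneg_nonneg sum_nonneg) auto
  then show ?thesis
    using assms sum_sa_step[OF assms(1,2)] by (simp add: is_sa_distr_def)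
qed

lemma is_sa_distr_sa_dist:
  fixes P :: "'s::finite \<Rightarrow> 'a::finite \<Rightarrow> 's \<Rightarrow> real"
  assumes "is_kernel P" "is_policy pol" "is_sa_distr q"
  shows "is_sa_distr (sa_dist P pol q t)"
  by (induction t) (simp_all add: sa_dist_def assms is_sa_distr_sa_step)

lemma is_sa_distr_le_1:
  fixes q :: "'s::finite \<Rightarrow> 'a::finite \<Rightarrow> real"
  assumes "is_sa_distr q"
  shows "q s a \<le> 1"
proof -
  have nonneg: "0 \<le> q s' a'" for s' a'
    using assms by (simp add: is_sa_distr_def)
  have "q s a \<le> (\<Sum>a'\<in>UNIV. q s a')"
    using nonneg by (intro member_le_sum) auto
  also have "\<dots> \<le> (\<Sum>s'\<in>UNIV. \<Sum>a'\<in>UNIV. q s' a')"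
    using nonneg by (intro member_le_sum sum_nonneg) auto
  finally show ?thesis
    using assms by (simp add: is_sa_distr_def)
qed

lemma summable_discounted_sa_dist:
  fixes P :: "'s::finite \<Rightarrow> 'a::finite \<Rightarrow> 's \<Rightarrow> real"
  assumes "is_kernel P" "is_policy pol" "is_sa_distr \<mu>" "0 \<le> \<gamma>" "\<gamma> < 1"
  shows "summable (\<lambda>t. \<gamma> ^ t * sa_dist P pol \<mu> t s a)"
proof (rule summable_comparison_test)
  have "0 \<le> sa_dist P pol \<mu> t s a" "sa_dist P pol \<mu> t s a \<le> 1" for t
    using is_sa_distr_sa_dist[OF assms(1-3)] is_sa_distr_le_1[OF is_sa_distr_sa_dist[OF assms(1-3)]]
    by (auto simp: is_sa_distr_def)
  then show "\<exists>N. \<forall>t\<ge>N. norm (\<gamma> ^ t * sa_dist P pol \<mu> t s a) \<le> \<gamma> ^ t"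
    using assms(4) by (auto intro!: mult_left_le simp: abs_mult)
  show "summable (\<lambda>t. \<gamma> ^ t)"
    using assms(4,5) by simp
qed

lemma is_sa_distr_occupancy:
  fixes P :: "'s::finite \<Rightarrow> 'a::finite \<Rightarrow> 's \<Rightarrow> real"
  assumes "is_kernel P" "is_policy pol" "is_sa_distr \<mu>" "0 \<le> \<gamma>" "\<gamma> < 1"
  shows "is_sa_distr (occupancy P pol \<gamma> \<mu>)"
proof -
  note dist = is_sa_distr_sa_dist[OF assms(1-3)]
  note summable = summable_discounted_sa_dist[OF assms]
  have "(\<Sum>s\<in>UNIV. \<Sum>a\<in>UNIV. \<Sum>t. \<gamma> ^ t * sa_dist P pol \<mu> t s a)
      = (\<Sum>t. \<Sum>s\<in>UNIV. \<Sum>a\<in>UNIV. \<gamma> ^ t * sa_dist P pol \<mu> t s a)"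
    by (simp add: summable summable_sum flip: suminf_sum)
  also have "\<dots> = (\<Sum>t. \<gamma> ^ t)"
    using dist by (simp add: is_sa_distr_def flip: sum_distrib_left)
  also have "\<dots> = 1 / (1 - \<gamma>)"
    using assms(4,5) by (simp add: suminf_geometric)
  finally have "(\<Sum>s\<in>UNIV. \<Sum>a\<in>UNIV. occupancy P pol \<gamma> \<mu> s a) = 1"
    using assms(5) by (simp add: occupancy_def flip: sum_distrib_left)
  moreover have "0 \<le> occupancy P pol \<gamma> \<mu> s a" for s a
    using assms(4,5) dist summable unfolding occupancy_def is_sa_distr_def
    by (auto intro!: mult_nonneg_nonneg suminf_nonneg)
  ultimately show ?thesis
    by (simp add: is_sa_distr_def)
qed

lemma occupancy_ge_initial:
  fixes P :: "'s::finite \<Rightarrow> 'a::finite \<Rightarrow> 's \<Rightarrow> real"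
  assumes "is_kernel P" "is_policy pol" "is_sa_distr \<mu>" "0 \<le> \<gamma>" "\<gamma> < 1"
  shows "(1 - \<gamma>) * \<mu> s a \<le> occupancy P pol \<gamma> \<mu> s a"
proof -
  have "(\<Sum>t\<in>{0}. \<gamma> ^ t * sa_dist P pol \<mu> t s a) \<le> (\<Sum>t. \<gamma> ^ t * sa_dist P pol \<mu> t s a)"
    using summable_discounted_sa_dist[OF assms] is_sa_distr_sa_dist[OF assms(1-3)] assms(4)
    by (intro sum_le_suminf) (auto simp: is_sa_distr_def)
  then show ?thesis
    using assms(5) by (simp add: occupancy_def sa_dist_def)
qed

theorem lemma3:
  fixes P :: "'s::finite \<Rightarrow> 'a::finite \<Rightarrow> 's \<Rightarrow> real"
    and pol :: "'s \<Rightarrow> 'a \<Rightarrow> real"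
    and \<mu> :: "'s \<Rightarrow> 'a \<Rightarrow> real"
    and \<gamma> :: real and k :: nat and s :: 's and a :: 'a
  assumes "is_kernel P" and "is_policy pol" and "is_sa_distr \<mu>"
    and "0 \<le> \<gamma>" and "\<gamma> < 1"
    and "\<mu> s a > 0"
  shows "sa_dist P pol (occupancy P pol \<gamma> \<mu>) k s a / occupancy P pol \<gamma> \<mu> s a
           \<le> 1 / ((1 - \<gamma>) * \<mu> s a)"
proof -
  define d where "d = occupancy P pol \<gamma> \<mu>"
  have p_distr: "is_sa_distr (sa_dist P pol d k)"
    unfolding d_def using assms(1-5) by (intro is_sa_distr_sa_dist is_sa_distr_occupancy)
  have d_lower: "(1 - \<gamma>) * \<mu> s a \<le> d s a"
    unfolding d_def using assms(1-5) by (rule occupancy_ge_initial)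
  have pos: "0 < (1 - \<gamma>) * \<mu> s a"
    using assms(5,6) by simp
  have "sa_dist P pol d k s a / d s a \<le> 1 / d s a"
    using p_distr is_sa_distr_le_1[OF p_distr] pos d_lower
    by (intro divide_right_mono) (auto simp: is_sa_distr_def)
  also have "\<dots> \<le> 1 / ((1 - \<gamma>) * \<mu> s a)"
    using pos d_lower by (intro divide_left_mono) auto
  finally show ?thesis
    unfolding d_def .
qed

end
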